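(* Let $\tau=\{1-t^2+2it:\ t\in\mathbb{R}\}$ (a parabola). Then: (1) $A\mapsto\zeta_+(A)$ is a conformal mapping of $\mathbb{C}_+=\{\Im A>0\}$ onto the domain in $\mathbb{C}_+$ bounded by the ray $[1,+\infty)$ and by $\tau\cap\mathbb{C}_+$; under this mapping the boundary part $[-1,+\infty)$ corresponds to $[1,+\infty)$ and $(-\infty,-1)$ corresponds to $\tau\cap\mathbb{C}_+$. (2) $A\mapsto\zeta_-(A)$ is a conformal mapping of $\mathbb{C}_+$ onto the domain in $\mathbb{C}$ bounded by the ray $[0,+\infty)$ and by $\tau\cap\mathbb{C}_-$ (where $\mathbb{C}_-=\{\Im z<0\}$); under this mapping the boundary part $(0,+\infty)$ corresponds to itself, the interval $[-1,0]$ corresponds to $[0,1]$, and $(-\infty,0)$ corresponds to $\tau\cap\mathbb{C}_-$. Moreover, the pre-image of the negative real axis $(-\infty,0)$ under $\zeta_-$ is the parabola in the upper $A$-half-plane given parametrically by $\{-t^2+2it:\ t\ge0\}$.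
   Context: For $A$ with $\Im A\ge 0$, $\zeta_\pm(A)=A+2\pm2\sqrt{A+1}=(1\pm\sqrt{A+1})^2$, where $\sqrt{\cdot}$ is the principal branch of the square root. Boundary correspondences are understood in the sense of the continuous extension of the maps to the boundary. *)

theory Defs
  imports "HOL-Complex_Analysis.Complex_Analysis"
begin

definition zeta_plus :: "complex \<Rightarrow> complex" where
  "zeta_plus A = A + 2 + 2 * csqrt (A + 1)"

definition zeta_minus :: "complex \<Rightarrow> complex" where
  "zeta_minus A = A + 2 - 2 * csqrt (A + 1)"

definition upper_hp :: "complex set" where
  "upper_hp = {z. Im z > 0}"

definition lower_hp :: "complex set" where
  "lower_hp = {z. Im z < 0}"

definition closed_upper_hp :: "complex set" where
  "closed_upper_hp = {z. Im z \<ge> 0}"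

definition tau :: "complex set" where
  "tau = range (\<lambda>t::real. 1 - (complex_of_real t)^2 + 2 * \<i> * complex_of_real t)"

text \<open>The domain in C_+ bounded by the ray [1,+inf) and tau \<inter> C_+.\<close>
definition dom_plus :: "complex set" where
  "dom_plus = {z. Im z > 0 \<and> Re z > 1 - (Im z)^2 / 4}"

text \<open>The domain in C bounded by the ray [0,+inf) and tau \<inter> C_-:
  the complement of the ray together with the closed region enclosed by
  the lower half of the parabola.\<close>
definition dom_minus :: "complex set" where
  "dom_minus = - (complex_of_real ` {0..} \<union> {z. Im z \<le> 0 \<and> Re z \<ge> 1 - (Im z)^2 / 4})"

end

theory Submission
  imports Defs
begin

text \<open>Put w = csqrt (A + 1). As A ranges over the upper half-plane, w ranges bijectively over
  the open first quadrant, and zeta_plus A = (1 + w)^2, zeta_minus A = (1 - w)^2. Hence zeta_plus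
  is squaring on the quarter-plane Re u > 1, Im u > 0 and zeta_minus is squaring on
  Re v < 1, Im v < 0; squaring is injective on both since neither contains a pair u, -u.
  The identity Re (u^2) - (1 - Im (u^2)^2 / 4) = ((Re u)^2 - 1) (1 + (Im u)^2) shows that squaring
  sends the line Re u = 1 onto the parabola tau and decides on which side of tau the square lies.
  On the real axis w is real for A \<ge> -1 and purely imaginary for A < -1, which splits the boundary.\<close>

lemma of_real_image_eq: "complex_of_real ` S = {z. Im z = 0 \<and> Re z \<in> S}"
  by (auto simp: image_iff complex_eq_iff intro!: exI[of _ "Re z" for z])

lemma Re_power2_minus_parabola:
  "Re (u^2) - (1 - (Im (u^2))^2 / 4) = ((Re u)^2 - 1) * (1 + (Im u)^2)"
  by (simp add: Re_power2 Im_power2 algebra_simps power2_eq_square)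

lemma mem_tau_iff: "z \<in> tau \<longleftrightarrow> Re z = 1 - (Im z)^2 / 4"
proof
  assume "z \<in> tau"
  then show "Re z = 1 - (Im z)^2 / 4"
    by (auto simp: tau_def power2_eq_square)
next
  assume "Re z = 1 - (Im z)^2 / 4"
  then have "z = 1 - (complex_of_real (Im z / 2))^2 + 2 * \<i> * complex_of_real (Im z / 2)"
    by (simp add: complex_eq_iff power2_eq_square)
  then show "z \<in> tau"
    unfolding tau_def by blast
qed

lemma tau_Int_upper_hp: "tau \<inter> upper_hp = (\<lambda>t. (1 + \<i> * complex_of_real t)^2) ` {0<..}"
proof safe
  fix z assume "z \<in> tau" "z \<in> upper_hp"
  then have "z = (1 + \<i> * complex_of_real (Im z / 2))^2" "Im z / 2 > 0"
    by (auto simp: mem_tau_iff upper_hp_def complex_eq_iff power2_eq_square)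
  then show "z \<in> (\<lambda>t. (1 + \<i> * complex_of_real t)^2) ` {0<..}"
    by blast
qed (auto simp: mem_tau_iff upper_hp_def power2_eq_square)

lemma tau_Int_lower_hp: "tau \<inter> lower_hp = (\<lambda>t. (1 - \<i> * complex_of_real t)^2) ` {0<..}"
proof safe
  fix z assume "z \<in> tau" "z \<in> lower_hp"
  then have "z = (1 - \<i> * complex_of_real (- Im z / 2))^2" "- Im z / 2 > 0"
    by (auto simp: mem_tau_iff lower_hp_def complex_eq_iff power2_eq_square)
  then show "z \<in> (\<lambda>t. (1 - \<i> * complex_of_real t)^2) ` {0<..}"
    by blast
qed (auto simp: mem_tau_iff lower_hp_def power2_eq_square)

lemma inj_on_power2:
  fixes S :: "'a::idom set"
  assumes "\<And>z. z \<in> S \<Longrightarrow> - z \<notin> S"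
  shows "inj_on (\<lambda>z. z^2) S"
  using assms by (intro inj_onI) (metis power2_eq_iff)

lemma zeta_plus_eq_square: "zeta_plus A = (1 + csqrt (A + 1))^2"
  unfolding zeta_plus_def by (simp add: power2_eq_square algebra_simps, simp add: power2_eq_square[symmetric])

lemma zeta_minus_eq_square: "zeta_minus A = (1 - csqrt (A + 1))^2"
  unfolding zeta_minus_def by (simp add: power2_eq_square algebra_simps, simp add: power2_eq_square[symmetric])

lemma csqrt_shift_eq_iff: "csqrt (A + 1) = csqrt (B + 1) \<longleftrightarrow> A = B"
  by (metis add_right_cancel power2_csqrt)

lemma csqrt_shift_in_quadrant:
  assumes "Im A > 0"
  shows "Re (csqrt (A + 1)) > 0" "Im (csqrt (A + 1)) > 0"
proof -
  let ?w = "csqrt (A + 1)"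
  have "Re ?w * Im ?w > 0"
    using assms arg_cong[OF power2_csqrt[of "A + 1"], of Im]
    by (simp add: Im_power2 del: csqrt.simps power2_csqrt)
  with Re_csqrt[of "A + 1"] show "Re ?w > 0" "Im ?w > 0"
    by (auto simp: zero_less_mult_iff simp del: csqrt.simps)
qed

lemma csqrt_shift_image_upper_hp:
  "(\<lambda>A. csqrt (A + 1)) ` upper_hp = {w. Re w > 0 \<and> Im w > 0}"
proof safe
  fix w assume w: "Re w > 0" "Im w > 0"
  then have "csqrt (w^2 - 1 + 1) = w" "w^2 - 1 \<in> upper_hp"
    by (simp_all add: csqrt_square upper_hp_def Im_power2)
  then show "w \<in> (\<lambda>A. csqrt (A + 1)) ` upper_hp"
    by (metis image_eqI)
qed (auto simp: upper_hp_def csqrt_shift_in_quadrant simp del: csqrt.simps)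

lemma one_pm_csqrt_shift_image_upper_hp:
  "(\<lambda>A. 1 + csqrt (A + 1)) ` upper_hp = {u. Re u > 1 \<and> Im u > 0}"
  "(\<lambda>A. 1 - csqrt (A + 1)) ` upper_hp = {v. Re v < 1 \<and> Im v < 0}"
proof -
  have "(\<lambda>A. 1 + csqrt (A + 1)) ` upper_hp = (\<lambda>w. 1 + w) ` {w. Re w > 0 \<and> Im w > 0}"
    "(\<lambda>A. 1 - csqrt (A + 1)) ` upper_hp = (\<lambda>w. 1 - w) ` {w. Re w > 0 \<and> Im w > 0}"
    by (simp_all only: csqrt_shift_image_upper_hp[symmetric] image_image)
  moreover have "(\<lambda>w. 1 + w) ` {w. Re w > 0 \<and> Im w > 0} = {u. Re u > 1 \<and> Im u > 0}"
    by (force intro: image_eqI[where x = "u - 1" for u])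
  moreover have "(\<lambda>w. 1 - w) ` {w. Re w > 0 \<and> Im w > 0} = {v. Re v < 1 \<and> Im v < 0}"
    by (force intro: image_eqI[where x = "1 - v" for v])
  ultimately show "(\<lambda>A. 1 + csqrt (A + 1)) ` upper_hp = {u. Re u > 1 \<and> Im u > 0}"
    "(\<lambda>A. 1 - csqrt (A + 1)) ` upper_hp = {v. Re v < 1 \<and> Im v < 0}"
    by simp_all
qed

lemma inj_on_zeta_plus: "inj_on zeta_plus upper_hp"
proof -
  have "inj_on ((\<lambda>u. u^2) \<circ> (\<lambda>A. 1 + csqrt (A + 1))) upper_hp"
  proof (rule comp_inj_on)
    show "inj_on (\<lambda>A. 1 + csqrt (A + 1)) upper_hp"
      by (intro inj_onI) (simp add: csqrt_shift_eq_iff del: csqrt.simps)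
    show "inj_on (\<lambda>u. u^2) ((\<lambda>A. 1 + csqrt (A + 1)) ` upper_hp)"
      unfolding one_pm_csqrt_shift_image_upper_hp by (rule inj_on_power2) simp
  qed
  then show ?thesis
    by (simp add: comp_def zeta_plus_eq_square[abs_def])
qed

lemma inj_on_zeta_minus: "inj_on zeta_minus upper_hp"
proof -
  have "inj_on ((\<lambda>v. v^2) \<circ> (\<lambda>A. 1 - csqrt (A + 1))) upper_hp"
  proof (rule comp_inj_on)
    show "inj_on (\<lambda>A. 1 - csqrt (A + 1)) upper_hp"
      by (intro inj_onI) (simp add: csqrt_shift_eq_iff del: csqrt.simps)
    show "inj_on (\<lambda>v. v^2) ((\<lambda>A. 1 - csqrt (A + 1)) ` upper_hp)"
      unfolding one_pm_csqrt_shift_image_upper_hp by (rule inj_on_power2) simp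
  qed
  then show ?thesis
    by (simp add: comp_def zeta_minus_eq_square[abs_def])
qed

lemma power2_image_Re_gt_one_Im_pos: "(\<lambda>u. u^2) ` {u. Re u > 1 \<and> Im u > 0} = dom_plus"
proof safe
  fix u assume u: "Re u > 1" "Im u > 0"
  then have "((Re u)^2 - 1) * (1 + (Im u)^2) > 0"
    using one_less_power[of "Re u" 2] by (intro mult_pos_pos) (auto intro: add_pos_nonneg)
  with u show "u^2 \<in> dom_plus"
    using Re_power2_minus_parabola[of u] by (simp add: dom_plus_def Im_power2)
next
  fix z assume "z \<in> dom_plus"
  then have z: "Im z > 0" "Re z > 1 - (Im z)^2 / 4"
    unfolding dom_plus_def by auto
  define c where "c = csqrt z"
  have cz: "c^2 = z"
    unfolding c_def by simp
  have "Re c * Im c > 0"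
    using z(1) unfolding cz[symmetric] Im_power2 by (simp add: mult.commute)
  with Re_csqrt[of z] have c: "Re c > 0" "Im c > 0"
    unfolding c_def by (auto simp: zero_less_mult_iff simp del: csqrt.simps)
  have "((Re c)^2 - 1) * (1 + (Im c)^2) > 0"
    using Re_power2_minus_parabola[of c] z cz by simp
  then have "1 < (Re c)^2"
    by (smt (verit) zero_le_power2 zero_less_mult_iff)
  with c have "Re c > 1"
    by (smt (verit) power_le_one)
  with c cz show "z \<in> (\<lambda>u. u^2) ` {u. Re u > 1 \<and> Im u > 0}"
    by blast
qed

lemma power2_image_Re_lt_one_Im_neg: "(\<lambda>v. v^2) ` {v. Re v < 1 \<and> Im v < 0} = dom_minus"
proof safe
  fix v assume v: "Re v < 1" "Im v < 0"
  show "v^2 \<in> dom_minus"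
    unfolding dom_minus_def
  proof safe
    fix x :: real assume "0 \<le> x" "v^2 = complex_of_real x"
    then have "Im (v^2) = 0" "Re (v^2) \<ge> 0"
      by simp_all
    with v have "Re v = 0"
      by (simp add: Im_power2)
    with v \<open>Re (v^2) \<ge> 0\<close> show False
      by (simp add: Re_power2)
  next
    assume "Im (v^2) \<le> 0" "1 - (Im (v^2))^2 / 4 \<le> Re (v^2)"
    with v have "Re v \<ge> 0" "((Re v)^2 - 1) * (1 + (Im v)^2) \<ge> 0"
      using Re_power2_minus_parabola[of v] by (auto simp: Im_power2 mult_le_0_iff)
    moreover from v \<open>Re v \<ge> 0\<close> have "(Re v)^2 < 1"
      by (simp add: power_less_one_iff)
    then have "((Re v)^2 - 1) * (1 + (Im v)^2) < 0"
      by (intro mult_neg_pos) (auto intro: add_pos_nonneg)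
    ultimately show False
      by linarith
  qed
next
  fix z assume "z \<in> dom_minus"
  then have z_ray: "z \<notin> complex_of_real ` {0..}"
    and z_parab: "\<not> (Im z \<le> 0 \<and> Re z \<ge> 1 - (Im z)^2 / 4)"
    unfolding dom_minus_def by auto
  define c where "c = csqrt z"
  have cz: "c^2 = z"
    unfolding c_def by simp
  have "Im c \<noteq> 0"
  proof
    assume "Im c = 0"
    then have "Im z = 0 \<and> Re z \<ge> 0"
      unfolding cz[symmetric] Im_power2 Re_power2 by simp
    with z_ray show False
      by (auto simp: of_real_image_eq)
  qed
  define v where "v = (if Im c < 0 then c else - c)"
  have vz: "v^2 = z" and v_Im: "Im v < 0"
    unfolding v_def using cz \<open>Im c \<noteq> 0\<close> by auto
  have "Re v < 1"
  proof (rule ccontr)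
    assume "\<not> Re v < 1"
    then have "Im z \<le> 0" "((Re v)^2 - 1) * (1 + (Im v)^2) \<ge> 0"
      using v_Im unfolding vz[symmetric] Im_power2
      by (auto simp: mult_nonneg_nonpos one_le_power intro!: mult_nonneg_nonneg)
    with z_parab show False
      using Re_power2_minus_parabola[of v] vz by simp
  qed
  with v_Im vz show "z \<in> (\<lambda>v. v^2) ` {v. Re v < 1 \<and> Im v < 0}"
    by blast
qed

lemma zeta_plus_image_upper_hp: "zeta_plus ` upper_hp = dom_plus"
proof -
  have "zeta_plus ` upper_hp = (\<lambda>u. u^2) ` (\<lambda>A. 1 + csqrt (A + 1)) ` upper_hp"
    unfolding image_image by (rule image_cong[OF refl zeta_plus_eq_square])
  then show ?thesis
    by (simp only: one_pm_csqrt_shift_image_upper_hp power2_image_Re_gt_one_Im_pos)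
qed

lemma zeta_minus_image_upper_hp: "zeta_minus ` upper_hp = dom_minus"
proof -
  have "zeta_minus ` upper_hp = (\<lambda>v. v^2) ` (\<lambda>A. 1 - csqrt (A + 1)) ` upper_hp"
    unfolding image_image by (rule image_cong[OF refl zeta_minus_eq_square])
  then show ?thesis
    by (simp only: one_pm_csqrt_shift_image_upper_hp power2_image_Re_lt_one_Im_neg)
qed

lemma csqrt_of_real_shift_nonneg:
  "x \<ge> -1 \<Longrightarrow> csqrt (complex_of_real x + 1) = complex_of_real (sqrt (x + 1))"
  using csqrt_of_real[of "x + 1"] by simp

lemma csqrt_of_real_shift_neg:
  "x < -1 \<Longrightarrow> csqrt (complex_of_real x + 1) = \<i> * complex_of_real (sqrt (- x - 1))"
  using csqrt_of_real'[of "x + 1"] by (simp add: mult.commute)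

lemma sqrt_shift_image_lessThan: "(\<lambda>x. sqrt (- x - 1)) ` {..<-1} = {0<..}"
proof safe
  fix t :: real assume "0 < t"
  then have "t = sqrt (- (- 1 - t^2) - 1)" "- 1 - t^2 \<in> {..<-1}"
    by simp_all
  then show "t \<in> (\<lambda>x. sqrt (- x - 1)) ` {..<-1}"
    by (rule image_eqI)
qed simp

lemma zeta_plus_image_tau: "zeta_plus ` complex_of_real ` {..<-1} = tau \<inter> upper_hp"
proof -
  have "zeta_plus ` complex_of_real ` {..<-1}
      = (\<lambda>t. (1 + \<i> * complex_of_real t)^2) ` (\<lambda>x. sqrt (- x - 1)) ` {..<-1}"
    unfolding image_image
    by (rule image_cong[OF refl]) (simp add: zeta_plus_eq_square csqrt_of_real_shift_neg del: csqrt.simps)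
  then show ?thesis
    by (simp only: sqrt_shift_image_lessThan tau_Int_upper_hp)
qed

lemma zeta_minus_image_tau: "zeta_minus ` complex_of_real ` {..<-1} = tau \<inter> lower_hp"
proof -
  have "zeta_minus ` complex_of_real ` {..<-1}
      = (\<lambda>t. (1 - \<i> * complex_of_real t)^2) ` (\<lambda>x. sqrt (- x - 1)) ` {..<-1}"
    unfolding image_image
    by (rule image_cong[OF refl]) (simp add: zeta_minus_eq_square csqrt_of_real_shift_neg del: csqrt.simps)
  then show ?thesis
    by (simp only: sqrt_shift_image_lessThan tau_Int_lower_hp)
qed

lemma zeta_plus_of_real:
  "x \<ge> -1 \<Longrightarrow> zeta_plus (complex_of_real x) = complex_of_real ((1 + sqrt (x + 1))^2)"
  unfolding zeta_plus_eq_square by (simp add: csqrt_of_real_shift_nonneg del: csqrt.simps)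

lemma zeta_minus_of_real:
  "x \<ge> -1 \<Longrightarrow> zeta_minus (complex_of_real x) = complex_of_real ((1 - sqrt (x + 1))^2)"
  unfolding zeta_minus_eq_square by (simp add: csqrt_of_real_shift_nonneg del: csqrt.simps)

lemma one_plus_sqrt_shift_image: "(\<lambda>x. (1 + sqrt (x + 1))^2) ` {-1..} = {1..}"
proof safe
  fix y :: real assume "1 \<le> y"
  then have "y = (1 + sqrt (((sqrt y - 1)^2 - 1) + 1))^2" "(sqrt y - 1)^2 - 1 \<in> {-1..}"
    by simp_all
  then show "y \<in> (\<lambda>x. (1 + sqrt (x + 1))^2) ` {-1..}"
    by (rule image_eqI)
qed simp

lemma one_minus_sqrt_shift_image_pos: "(\<lambda>x. (1 - sqrt (x + 1))^2) ` {0<..} = {0<..}"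
proof safe
  fix y :: real assume "0 < y"
  then have "y = (1 - sqrt (((1 + sqrt y)^2 - 1) + 1))^2" "(1 + sqrt y)^2 - 1 \<in> {0<..}"
    by (simp_all add: one_less_power)
  then show "y \<in> (\<lambda>x. (1 - sqrt (x + 1))^2) ` {0<..}"
    by (rule image_eqI)
qed simp

lemma one_minus_sqrt_shift_image_unit: "(\<lambda>x. (1 - sqrt (x + 1))^2) ` {-1..0} = {0..1}"
proof safe
  fix y :: real assume "y \<in> {0..1}"
  then have "y = (1 - sqrt (((1 - sqrt y)^2 - 1) + 1))^2" "(1 - sqrt y)^2 - 1 \<in> {-1..0}"
    by (simp_all add: power_le_one)
  then show "y \<in> (\<lambda>x. (1 - sqrt (x + 1))^2) ` {-1..0}"
    by (rule image_eqI)
qed (simp add: power_le_one)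

lemma zeta_plus_image_ray: "zeta_plus ` complex_of_real ` {-1..} = complex_of_real ` {1..}"
proof -
  have "zeta_plus ` complex_of_real ` {-1..} = complex_of_real ` (\<lambda>x. (1 + sqrt (x + 1))^2) ` {-1..}"
    unfolding image_image by (rule image_cong[OF refl], rule zeta_plus_of_real) auto
  then show ?thesis
    by (simp only: one_plus_sqrt_shift_image)
qed

lemma zeta_minus_image_pos: "zeta_minus ` complex_of_real ` {0<..} = complex_of_real ` {0<..}"
proof -
  have "zeta_minus ` complex_of_real ` {0<..} = complex_of_real ` (\<lambda>x. (1 - sqrt (x + 1))^2) ` {0<..}"
    unfolding image_image by (rule image_cong[OF refl], rule zeta_minus_of_real) auto
  then show ?thesis
    by (simp only: one_minus_sqrt_shift_image_pos)
qed

lemma zeta_minus_image_unit: "zeta_minus ` complex_of_real ` {-1..0} = complex_of_real ` {0..1}"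
proof -
  have "zeta_minus ` complex_of_real ` {-1..0} = complex_of_real ` (\<lambda>x. (1 - sqrt (x + 1))^2) ` {-1..0}"
    unfolding image_image by (rule image_cong[OF refl], rule zeta_minus_of_real) auto
  then show ?thesis
    by (simp only: one_minus_sqrt_shift_image_unit)
qed

lemma zeta_minus_preimage_negative_reals:
  "{A \<in> upper_hp. zeta_minus A \<in> complex_of_real ` {..<0}} =
     (\<lambda>t. 2 * \<i> * complex_of_real t - (complex_of_real t)^2) ` {0..} \<inter> upper_hp"
proof (intro equalityI subsetI)
  fix A assume "A \<in> {A \<in> upper_hp. zeta_minus A \<in> complex_of_real ` {..<0}}"
  then have A: "A \<in> upper_hp" and "Im ((1 - csqrt (A + 1))^2) = 0"
    by (auto simp: zeta_minus_eq_square of_real_image_eq simp del: csqrt.simps)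
  define w where "w = csqrt (A + 1)"
  have "Re w > 0" "Im w > 0"
    using A csqrt_shift_in_quadrant unfolding upper_hp_def w_def by auto
  moreover have "(1 - Re w) * Im w = 0"
    using \<open>Im ((1 - csqrt (A + 1))^2) = 0\<close> unfolding w_def[symmetric] Im_power2 by simp
  ultimately have "Re w = 1"
    by simp
  moreover have "A = w^2 - 1"
    unfolding w_def by simp
  ultimately have "A = 2 * \<i> * complex_of_real (Im w) - (complex_of_real (Im w))^2"
    by (simp add: complex_eq_iff Re_power2 Im_power2 power2_eq_square)
  with A \<open>Im w > 0\<close> show "A \<in> (\<lambda>t. 2 * \<i> * complex_of_real t - (complex_of_real t)^2) ` {0..} \<inter> upper_hp"
    by force
next
  fix A assume "A \<in> (\<lambda>t. 2 * \<i> * complex_of_real t - (complex_of_real t)^2) ` {0..} \<inter> upper_hp"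
  then obtain t where A_eq: "A = 2 * \<i> * complex_of_real t - (complex_of_real t)^2"
    and A: "A \<in> upper_hp" by auto
  then have "t > 0"
    by (simp add: upper_hp_def)
  have "A + 1 = (1 + \<i> * complex_of_real t)^2"
    unfolding A_eq by (simp add: power2_eq_square algebra_simps)
  then have "csqrt (A + 1) = 1 + \<i> * complex_of_real t"
    by (simp add: csqrt_square)
  then have "zeta_minus A = complex_of_real (- (t^2))"
    by (simp add: zeta_minus_eq_square complex_eq_iff power2_eq_square del: csqrt.simps)
  with A \<open>t > 0\<close> show "A \<in> {A \<in> upper_hp. zeta_minus A \<in> complex_of_real ` {..<0}}"
    by (simp add: of_real_image_eq)
qed

lemma open_dom_plus: "open dom_plus"
  unfolding dom_plus_def by (intro open_Collect_conj open_Collect_less continuous_intros) auto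

lemma closure_dom_plus: "closure dom_plus = {z. Im z \<ge> 0 \<and> Re z \<ge> 1 - (Im z)^2 / 4}" (is "_ = ?C")
proof
  have "closed ?C"
    by (intro closed_Collect_conj closed_Collect_le continuous_intros) auto
  then show "closure dom_plus \<subseteq> ?C"
    by (rule closure_minimal[rotated]) (auto simp: dom_plus_def)
  show "?C \<subseteq> closure dom_plus"
  proof
    fix z assume "z \<in> ?C"
    then have z: "Im z \<ge> 0" "Re z \<ge> 1 - (Im z)^2 / 4"
      by simp_all
    show "z \<in> closure dom_plus"
      unfolding closure_approachable
    proof (intro allI impI)
      fix e :: real assume "e > 0"
      define y where "y = z + complex_of_real (e / 3) + \<i> * complex_of_real (e / 3)"
      have y: "Re y = Re z + e / 3" "Im y = Im z + e / 3"
        by (simp_all add: y_def)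
      have "(Im z)^2 \<le> (Im y)^2"
        using z \<open>e > 0\<close> y by (intro power_mono) auto
      with z \<open>e > 0\<close> y have "y \<in> dom_plus"
        unfolding dom_plus_def mem_Collect_eq by (intro conjI) linarith+
      moreover have "dist y z \<le> e / 3 + e / 3"
        unfolding y_def dist_norm
        using norm_triangle_ineq[of "complex_of_real (e / 3)" "\<i> * complex_of_real (e / 3)"] \<open>e > 0\<close>
        by (simp add: norm_mult)
      ultimately show "\<exists>y\<in>dom_plus. dist y z < e"
        using \<open>e > 0\<close> by (intro bexI[of _ y]) auto
    qed
  qed
qed

lemma frontier_dom_plus: "frontier dom_plus = complex_of_real ` {1..} \<union> (tau \<inter> upper_hp)"
  unfolding frontier_def closure_dom_plus interior_open[OF open_dom_plus]
  by (auto simp: of_real_image_eq mem_tau_iff upper_hp_def dom_plus_def)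

lemma open_dom_minus: "open dom_minus"
proof -
  have "closed (complex_of_real ` {0..})"
    unfolding of_real_image_eq atLeast_iff
    by (intro closed_Collect_conj closed_Collect_eq closed_Collect_le continuous_intros)
  then show ?thesis
    unfolding dom_minus_def
    by (intro open_Compl closed_Un closed_Collect_conj closed_Collect_le continuous_intros) auto
qed

lemma closure_dom_minus: "closure dom_minus = - {z. Im z < 0 \<and> Re z > 1 - (Im z)^2 / 4}" (is "_ = - ?I")
proof
  have "closed (- ?I)"
    by (intro closed_Compl open_Collect_conj open_Collect_less continuous_intros) auto
  then show "closure dom_minus \<subseteq> - ?I"
    by (rule closure_minimal[rotated]) (auto simp: dom_minus_def)
  show "- ?I \<subseteq> closure dom_minus"
  proof
    fix z assume z: "z \<in> - ?I"
    show "z \<in> closure dom_minus"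
      unfolding closure_approachable
    proof (intro allI impI)
      fix e :: real assume "e > 0"
      define y where "y = (if Im z \<ge> 0 then z + \<i> * complex_of_real (e / 2) else z - complex_of_real (e / 2))"
      have "y \<in> dom_minus"
        using z \<open>e > 0\<close> unfolding y_def dom_minus_def by (auto simp: of_real_image_eq)
      moreover have "dist y z < e"
        unfolding y_def dist_norm using \<open>e > 0\<close> by (simp add: norm_mult)
      ultimately show "\<exists>y\<in>dom_minus. dist y z < e"
        by blast
    qed
  qed
qed

lemma frontier_dom_minus: "frontier dom_minus = complex_of_real ` {0..} \<union> (tau \<inter> lower_hp)"
  unfolding frontier_def closure_dom_minus interior_open[OF open_dom_minus]
  by (auto simp: of_real_image_eq mem_tau_iff lower_hp_def dom_minus_def)

lemma zeta_plus_holomorphic: "zeta_plus holomorphic_on upper_hp"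
  unfolding zeta_plus_def upper_hp_def
  by (intro holomorphic_intros) (auto simp: complex_nonpos_Reals_iff)

lemma zeta_minus_holomorphic: "zeta_minus holomorphic_on upper_hp"
  unfolding zeta_minus_def upper_hp_def
  by (intro holomorphic_intros) (auto simp: complex_nonpos_Reals_iff)

text \<open>csqrt jumps across the negative reals, but on the closed upper half-plane it agrees with
  the explicit formula below, which is continuous.\<close>
lemma continuous_on_csqrt_closed_upper: "continuous_on {z. Im z \<ge> 0} csqrt"
proof -
  have "continuous_on {z. Im z \<ge> 0} (\<lambda>z. Complex (sqrt ((cmod z + Re z) / 2)) (sqrt ((cmod z - Re z) / 2)))"
    unfolding Complex_eq by (intro continuous_intros) auto
  then show ?thesis
    by (rule continuous_on_cong[THEN iffD1, rotated 2]) (auto simp: complex_eq_iff)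
qed

lemma continuous_on_csqrt_shift: "continuous_on closed_upper_hp (\<lambda>A. csqrt (A + 1))"
  by (rule continuous_on_compose2[OF continuous_on_csqrt_closed_upper])
    (auto intro: continuous_intros simp: closed_upper_hp_def)

lemma zeta_plus_continuous: "continuous_on closed_upper_hp zeta_plus"
  unfolding zeta_plus_def by (intro continuous_intros continuous_on_csqrt_shift)

lemma zeta_minus_continuous: "continuous_on closed_upper_hp zeta_minus"
  unfolding zeta_minus_def by (intro continuous_intros continuous_on_csqrt_shift)

theorem lemma2p2:
  shows
  \<comment> \<open>(1)\<close>
  "(zeta_plus holomorphic_on upper_hp \<and> inj_on zeta_plus upper_hp \<and>
     zeta_plus ` upper_hp = dom_plus \<and>
     open dom_plus \<and> connected dom_plus \<and> dom_plus \<subseteq> upper_hp \<and>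
     frontier dom_plus = complex_of_real ` {1..} \<union> (tau \<inter> upper_hp) \<and>
     continuous_on closed_upper_hp zeta_plus \<and>
     zeta_plus ` (complex_of_real ` {-1..}) = complex_of_real ` {1..} \<and>
     zeta_plus ` (complex_of_real ` {..<-1}) = tau \<inter> upper_hp)
   \<and>
  \<comment> \<open>(2)\<close>
   (zeta_minus holomorphic_on upper_hp \<and> inj_on zeta_minus upper_hp \<and>
     zeta_minus ` upper_hp = dom_minus \<and>
     open dom_minus \<and> connected dom_minus \<and>
     frontier dom_minus = complex_of_real ` {0..} \<union> (tau \<inter> lower_hp) \<and>
     continuous_on closed_upper_hp zeta_minus \<and>
     zeta_minus ` (complex_of_real ` {0<..}) = complex_of_real ` {0<..} \<and>
     zeta_minus ` (complex_of_real ` {-1..0}) = complex_of_real ` {0..1} \<and>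
     zeta_minus ` (complex_of_real ` {..<-1}) = tau \<inter> lower_hp \<and>
     {A \<in> upper_hp. zeta_minus A \<in> complex_of_real ` {..<0}} =
       (\<lambda>t::real. 2 * \<i> * complex_of_real t - (complex_of_real t)^2) ` {0..} \<inter> upper_hp)"
proof -
  have "connected upper_hp"
    unfolding upper_hp_def by (rule connected_halfspace_Im_gt)
  then have "connected dom_plus" "connected dom_minus"
    using connected_continuous_image holomorphic_on_imp_continuous_on
      zeta_plus_holomorphic zeta_minus_holomorphic
      zeta_plus_image_upper_hp zeta_minus_image_upper_hp
    by metis+
  moreover have "dom_plus \<subseteq> upper_hp"
    by (auto simp: dom_plus_def upper_hp_def)
  ultimately show ?thesis
    using zeta_plus_holomorphic inj_on_zeta_plus zeta_plus_image_upper_hp open_dom_plus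
      frontier_dom_plus zeta_plus_continuous zeta_plus_image_ray zeta_plus_image_tau
      zeta_minus_holomorphic inj_on_zeta_minus zeta_minus_image_upper_hp open_dom_minus
      frontier_dom_minus zeta_minus_continuous zeta_minus_image_pos zeta_minus_image_unit
      zeta_minus_image_tau zeta_minus_preimage_negative_reals
    by blast
qed

end
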